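(* Let $M=p_1^{n_1}\cdots p_K^{n_K}$ with distinct primes and $n_\nu\in\mathbb{N}$, and let $A\oplus B=\mathbb{Z}_M$. Fix distinct $i,j\in\{1,\dots,K\}$, let $z\in\mathbb{Z}_M$, and let $\Lambda=\Lambda(z,M/(p_ip_j))$. Let $a\in A$, $b\in B$ satisfy $a+b=z$. Then there exists $\nu\in\{i,j\}$ such that $\Sigma_A(\Lambda)\subset A\cap\Pi(a,p_\nu^{n_\nu-1})$ and $\Sigma_B(\Lambda)\subset B\cap\Pi(b,p_\nu^{n_\nu-1})$.
   Context: $A\oplus B=\mathbb{Z}_M$ means every element of $\mathbb{Z}_M$ is uniquely $a+b$ with $a\in A$, $b\in B$. For $d\mid M$, $\Lambda(x,d)=\{x'\in\mathbb{Z}_M: d\mid x-x'\}$, and $\Pi(x,p^\alpha)=\Lambda(x,p^\alpha)$. For $Z\subset\mathbb{Z}_M$, $\Sigma_A(Z)=\{a\in A:a+b\in Z\text{ for some }b\in B\}$, $\Sigma_B(Z)=\{b\in B:a+b\in Z\text{ for some }a\in A\}$. *)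

theory Defs
  imports "HOL-Number_Theory.Number_Theory"
begin

text \<open>Z_M is modelled as the residues {0..<M} with addition modulo M.\<close>

definition ZM :: "nat \<Rightarrow> nat set" where
  "ZM M = {0..<M}"

definition tiling :: "nat \<Rightarrow> nat set \<Rightarrow> nat set \<Rightarrow> bool" where
  "tiling M A B \<longleftrightarrow> A \<subseteq> ZM M \<and> B \<subseteq> ZM M \<and>
     (\<forall>x\<in>ZM M. \<exists>!ab. fst ab \<in> A \<and> snd ab \<in> B \<and> (fst ab + snd ab) mod M = x)"

text \<open>\<Lambda>(x,d) = {x' \<in> Z_M : d | x - x'}; \<Pi>(x,p^\<alpha>) = \<Lambda>(x,p^\<alpha>).\<close>
definition Lam :: "nat \<Rightarrow> nat \<Rightarrow> nat \<Rightarrow> nat set" where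
  "Lam M x d = {x' \<in> ZM M. [x = x'] (mod d)}"

definition SigmaA :: "nat \<Rightarrow> nat set \<Rightarrow> nat set \<Rightarrow> nat set \<Rightarrow> nat set" where
  "SigmaA M A B Z = {a \<in> A. \<exists>b\<in>B. (a + b) mod M \<in> Z}"

definition SigmaB :: "nat \<Rightarrow> nat set \<Rightarrow> nat set \<Rightarrow> nat set \<Rightarrow> nat set" where
  "SigmaB M A B Z = {b \<in> B. \<exists>a\<in>A. (a + b) mod M \<in> Z}"

end

theory Submission
  imports Defs
begin

text \<open>
  The key input is Tijdeman's dilation theorem: if \<open>A \<oplus> B = \<int>\<^sub>M\<close> and \<open>gcd u M = 1\<close>, then
  \<open>uA \<oplus> B = \<int>\<^sub>M\<close>. For a prime \<open>u\<close> one counts the words \<open>(a\<^sub>1, \<dots>, a\<^sub>u)\<close> over \<open>A\<close> with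
  \<open>a\<^sub>1 + \<dots> + a\<^sub>u + b \<equiv> x\<close> for some \<open>b \<in> B\<close>: there are \<open>|A|^(u - 1)\<close> of them, rotation
  permutes the non-constant ones in orbits of size \<open>u\<close>, and \<open>u\<close> does not divide \<open>|A|\<close>
  (a divisor of \<open>M\<close>), so some constant word occurs, i.e. \<open>ua + b \<equiv> x\<close> is solvable. Consequently
  \<open>u (a\<^sub>1 - a\<^sub>2) \<equiv> b\<^sub>2 - b\<^sub>1 (mod M)\<close> with \<open>u\<close> a unit forces \<open>a\<^sub>1 = a\<^sub>2\<close>.

  Let \<open>N = M / (p\<^sub>i p\<^sub>j)\<close>. Suppose \<open>a\<^sub>1 + b\<^sub>1 \<equiv> a\<^sub>2 + b\<^sub>2 (mod N)\<close> while \<open>a\<^sub>1 - a\<^sub>2\<close> is divisible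
  neither by \<open>p\<^sub>i^(n\<^sub>i - 1)\<close> nor by \<open>p\<^sub>j^(n\<^sub>j - 1)\<close>. Then the same holds for \<open>b\<^sub>2 - b\<^sub>1\<close>, so
  both differences have the same gcd with \<open>M\<close> as with \<open>N\<close>; being congruent modulo \<open>N\<close>, they
  then have the same gcd with \<open>M\<close> and differ by a unit factor modulo \<open>M\<close>, which is
  impossible. Hence any two elements of \<open>\<Sigma>\<^sub>A(\<Lambda>)\<close> are congruent modulo \<open>p\<^sub>i^(n\<^sub>i - 1)\<close> or
  modulo \<open>p\<^sub>j^(n\<^sub>j - 1)\<close>, and then all of them are congruent to \<open>a\<close> modulo one of the two.
\<close>

section \<open>Fixpoint-free maps of prime order\<close>

lemma funpow_prime_period_fixpoint:
  assumes p: "prime p" and "(f ^^ p) x = x" and k: "(f ^^ k) x = x" "\<not> p dvd k"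
  shows "f x = x"
proof -
  have "coprime k p"
    using prime_imp_coprime[OF p k(2)] by (simp add: coprime_commute)
  then obtain m where m: "[k * m = 1] (mod p)"
    using cong_solve_coprime_nat by fastforce
  have "(f ^^ (k * m)) x = x"
    using funpow_mod_eq[OF k(1), of "k * m"] k(1) by simp
  moreover have "k * m mod p = 1"
    using m prime_gt_1_nat[OF p] by (simp add: cong_def)
  then have "(f ^^ (k * m)) x = f x"
    using funpow_mod_eq[OF assms(2), of "k * m"] by simp
  ultimately show ?thesis by simp
qed

lemma card_funpow_orbit_prime:
  assumes p: "prime p" and period: "(f ^^ p) x = x" and moves: "\<And>k. f ((f ^^ k) x) \<noteq> (f ^^ k) x"
  shows "card ((\<lambda>k. (f ^^ k) x) ` {..<p}) = p"
proof -
  have "inj_on (\<lambda>k. (f ^^ k) x) {..<p}"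
  proof (rule linorder_inj_onI')
    fix k l assume "k \<in> {..<p}" "l \<in> {..<p}" "k < l"
    then have kl: "k < l" "l < p" by simp_all
    show "(f ^^ k) x \<noteq> (f ^^ l) x"
    proof
      assume eq: "(f ^^ k) x = (f ^^ l) x"
      let ?y = "(f ^^ k) x"
      have "(f ^^ (l - k)) ?y = (f ^^ (l - k + k)) x" by (simp add: funpow_add)
      also have "\<dots> = ?y" using kl eq by simp
      finally have shift_fixed: "(f ^^ (l - k)) ?y = ?y" .
      have "(f ^^ p) ?y = (f ^^ k) ((f ^^ p) x)"
        by (metis comp_apply funpow_add add.commute)
      then have "(f ^^ p) ?y = ?y" using period by simp
      moreover have "\<not> p dvd l - k" using kl by (simp add: nat_dvd_not_less)
      ultimately have "f ?y = ?y" using funpow_prime_period_fixpoint[OF p _ shift_fixed] by blast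
      then show False using moves by blast
    qed
  qed
  then show ?thesis by (simp add: card_image)
qed

lemma prime_dvd_card_fixpoint_free:
  assumes "finite S" and p: "prime p" and "f ` S \<subseteq> S"
    and "\<forall>x\<in>S. (f ^^ p) x = x" and "\<forall>x\<in>S. f x \<noteq> x"
  shows "p dvd card S"
  using assms(1,3-)
proof (induction S rule: finite_psubset_induct)
  case (psubset S)
  show ?case
  proof (cases "S = {}")
    case False
    then obtain x where x: "x \<in> S" by blast
    define orb where "orb = (\<lambda>k. (f ^^ k) x) ` {..<p}"
    have p0: "p > 0" using p prime_gt_0_nat by blast
    have period: "(f ^^ p) x = x" using psubset.prems x by blast
    have iterate_in_S: "(f ^^ k) x \<in> S" for k
      by (induction k) (use x psubset.prems(1) in auto)
    have "orb \<subseteq> S" unfolding orb_def using iterate_in_S by blast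
    have iterate_in_orb: "(f ^^ k) x \<in> orb" for k
      unfolding orb_def using funpow_mod_eq[OF period, of k] p0
      by (metis imageI lessThan_iff mod_less_divisor)
    have card_orb: "card orb = p"
      unfolding orb_def using card_funpow_orbit_prime[OF p period] psubset.prems(3) iterate_in_S
      by blast
    have "f ` (S - orb) \<subseteq> S - orb"
    proof
      fix z assume "z \<in> f ` (S - orb)"
      then obtain y where y: "y \<in> S" "y \<notin> orb" and z: "z = f y" by blast
      have "f y \<notin> orb"
      proof
        assume "f y \<in> orb"
        then obtain k where k: "f y = (f ^^ k) x" unfolding orb_def by blast
        have "y = (f ^^ Suc (p - 1)) y" using y psubset.prems(2) p0 by simp
        also have "\<dots> = (f ^^ (p - 1)) (f y)" by (simp only: funpow_Suc_right comp_apply)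
        also have "\<dots> = (f ^^ (p - 1 + k)) x" by (simp add: k funpow_add)
        finally show False using y(2) iterate_in_orb by simp
      qed
      then show "z \<in> S - orb" using y z psubset.prems(1) by blast
    qed
    moreover have "S - orb \<subset> S" using x iterate_in_orb[of 0] by auto
    ultimately have "p dvd card (S - orb)"
      by (intro psubset.IH) (use psubset.prems in auto)
    moreover have "card S = card (S - orb) + p"
      using card_Diff_subset[OF finite_subset[OF _ psubset.hyps]] card_mono[OF psubset.hyps]
        \<open>orb \<subseteq> S\<close> card_orb by fastforce
    ultimately show ?thesis by simp
  qed simp
qed

lemma rotate1_eq_self_iff: "rotate1 xs = xs \<longleftrightarrow> (\<exists>c. xs = replicate (length xs) c)"
proof
  assume "rotate1 xs = xs"
  then have "xs = [] \<or> card (set xs) = 1" by (rule rotate1_fixpoint_card)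
  then show "\<exists>c. xs = replicate (length xs) c"
    by (metis card_1_singletonE list.size(3) replicate_0 replicate_length_same singletonD)
qed (metis rotate1_replicate)

lemma card_words_cong_card_constant_words:
  assumes "finite T" and q: "prime q" and len: "\<forall>xs\<in>T. length xs = q" and "rotate1 ` T \<subseteq> T"
  shows "[card T = card {c. replicate q c \<in> T}] (mod q)"
proof -
  let ?const = "{xs \<in> T. rotate1 xs = xs}" and ?moved = "{xs \<in> T. rotate1 xs \<noteq> xs}"
  have "q dvd card ?moved"
  proof (rule prime_dvd_card_fixpoint_free[OF _ q])
    show "rotate1 ` ?moved \<subseteq> ?moved"
      using assms(4) inj_rotate1 by (auto dest: injD)
    show "\<forall>xs\<in>?moved. (rotate1 ^^ q) xs = xs"
      using len by (simp flip: rotate_def)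
  qed (use assms(1) in auto)
  have "?const = (\<lambda>c. replicate q c) ` {c. replicate q c \<in> T}"
    using len unfolding rotate1_eq_self_iff by force
  then have card_const: "card ?const = card {c. replicate q c \<in> T}"
    using prime_gt_0_nat[OF q] by (simp add: card_image inj_on_def)
  have "card T = card (?const \<union> ?moved)" by (rule arg_cong[where f = card]) blast
  also have "\<dots> = card ?const + card ?moved"
    using assms(1) by (intro card_Un_disjoint) auto
  finally show ?thesis
    using card_const \<open>q dvd card ?moved\<close> by (auto simp: cong_def elim!: dvdE)
qed

section \<open>Congruences and gcds\<close>

lemma exists_coprime_cong:
  fixes u0 m M :: int
  assumes "M \<noteq> 0" and cop: "coprime u0 m"
  shows "\<exists>u. [u = u0] (mod m) \<and> coprime u M"
proof -
  define S where "S = {q \<in> prime_factors M. \<not> q dvd u0}"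
  define u where "u = u0 + m * \<Prod>S"
  have "finite S" unfolding S_def by simp
  have "coprime u M"
  proof (rule ccontr)
    assume "\<not> coprime u M"
    then obtain q where q: "prime q" "q dvd gcd u M"
      using prime_divisorE[of "gcd u M"] assms(1) by (metis gcd_eq_0_iff is_unit_gcd)
    then have "q dvd u" "q dvd M" by auto
    show False
    proof (cases "q dvd u0")
      case True
      then have "\<not> q dvd m" using cop q(1) coprime_common_divisor not_prime_unit by blast
      moreover have "\<not> q dvd \<Prod>S"
      proof
        assume "q dvd \<Prod>S"
        then obtain r where "r \<in> S" "q dvd r"
          using prime_dvd_prod_iff[OF \<open>finite S\<close> q(1), of "\<lambda>x. x"] by auto
        moreover have "prime r" using \<open>r \<in> S\<close> unfolding S_def by (simp add: in_prime_factors_iff)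
        ultimately have "q = r" using primes_dvd_imp_eq[OF q(1)] by blast
        then show False using True \<open>r \<in> S\<close> unfolding S_def by blast
      qed
      ultimately have "\<not> q dvd m * \<Prod>S" using q(1) by (simp add: prime_dvd_mult_iff)
      then show False using \<open>q dvd u\<close> True unfolding u_def by (simp add: dvd_add_right_iff)
    next
      case False
      then have "q \<in> S" using q \<open>q dvd M\<close> assms(1) unfolding S_def by (simp add: in_prime_factors_iff)
      then have "q dvd \<Prod>S" using dvd_prodI[OF \<open>finite S\<close>, of q "\<lambda>x. x"] by simp
      then have "q dvd m * \<Prod>S" by simp
      then show False using \<open>q dvd u\<close> False unfolding u_def by (simp add: dvd_add_left_iff)
    qed
  qed
  moreover have "[u = u0] (mod m)" unfolding u_def cong_iff_dvd_diff by simp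
  ultimately show ?thesis by blast
qed

lemma exists_coprime_mult_cong:
  fixes X Y M :: int
  assumes "M \<noteq> 0" and gcd_eq: "gcd X M = gcd Y M"
  shows "\<exists>u. coprime u M \<and> [u * X = Y] (mod M)"
proof -
  define d where "d = gcd X M"
  define s t m where "s = X div d" and "t = Y div d" and "m = M div d"
  have X: "X = d * s" and M: "M = d * m" unfolding s_def m_def d_def by simp_all
  have Y: "Y = d * t" unfolding t_def d_def gcd_eq by simp
  have "coprime s m" "coprime t m"
    using div_gcd_coprime[of X M] div_gcd_coprime[of Y M] assms(1)
    unfolding s_def t_def m_def d_def gcd_eq by simp_all
  obtain s' where s': "[s * s' = 1] (mod m)" using cong_solve_coprime_int[OF \<open>coprime s m\<close>] by blast
  then have "coprime s' m"
    unfolding coprime_iff_invertible_int by (intro exI[of _ s]) (simp add: mult.commute)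
  then have "coprime (t * s') m" using \<open>coprime t m\<close> by simp
  then obtain u where u: "[u = t * s'] (mod m)" "coprime u M"
    using exists_coprime_cong[OF assms(1)] by blast
  have "[u * s = t * s' * s] (mod m)" using u(1) by (rule cong_scalar_right)
  also have "[t * s' * s = t * 1] (mod m)"
    using cong_scalar_left[OF s', of t] by (simp add: ac_simps)
  finally have "m dvd u * s - t" by (simp add: cong_iff_dvd_diff)
  then have "d * m dvd d * (u * s - t)" by (rule mult_dvd_mono[OF dvd_refl])
  then have "M dvd u * X - Y" unfolding X Y M by (simp add: algebra_simps)
  then show ?thesis using u(2) by (auto simp: cong_iff_dvd_diff)
qed

lemma gcd_mult_prime_eq:
  fixes X L q :: "'a :: factorial_semiring_gcd"
  assumes q: "prime q" and "q ^ k dvd L" and "\<not> q ^ k dvd X"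
  shows "gcd X (L * q) = gcd X L"
proof (rule associated_eqI)
  let ?g = "gcd X (L * q)"
  have "?g \<noteq> 0" using assms(3) by auto
  then obtain g' where g: "?g = q ^ multiplicity q ?g * g'" and "\<not> q dvd g'"
    using multiplicity_decompose' q not_prime_unit by blast
  let ?e = "multiplicity q ?g"
  have "q ^ ?e dvd X" using g by (metis dvd_triv_left gcd_dvd1 dvd_trans)
  then have "\<not> k \<le> ?e" using assms(3) le_imp_power_dvd dvd_trans by blast
  then have "q ^ ?e dvd L" using assms(2) le_imp_power_dvd dvd_trans by (metis nat_le_linear)
  moreover have "g' dvd L"
  proof -
    have "g' dvd L * q" using g by (metis dvd_triv_right gcd_dvd2 dvd_trans)
    moreover have "coprime g' q"
      using prime_imp_coprime[OF q \<open>\<not> q dvd g'\<close>] by (simp add: coprime_commute)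
    ultimately show ?thesis by (simp add: coprime_dvd_mult_left_iff)
  qed
  moreover have "coprime (q ^ ?e) g'"
    using prime_imp_coprime[OF q \<open>\<not> q dvd g'\<close>] by simp
  ultimately have "?g dvd L" using g by (metis divides_mult)
  then show "?g dvd gcd X L" by simp
qed (simp_all add: gcd_mono)

lemma pairwise_cong_imp_all_cong:
  assumes "\<forall>x\<in>S. \<forall>y\<in>S. [x = y] (mod P) \<or> [x = y] (mod Q)" and "a \<in> S"
  shows "(\<forall>x\<in>S. [x = a] (mod P)) \<or> (\<forall>x\<in>S. [x = a] (mod Q))"
proof (rule ccontr)
  assume "\<not> ?thesis"
  then obtain x y where "x \<in> S" "\<not> [x = a] (mod P)" "y \<in> S" "\<not> [y = a] (mod Q)" by blast
  moreover from this have "[x = a] (mod Q)" "[y = a] (mod P)" using assms by blast+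
  ultimately show False using assms(1) by (meson cong_sym cong_trans)
qed

lemma prod_power_cofactor:
  fixes p n :: "'a \<Rightarrow> nat"
  assumes "finite I" and "i \<in> I" "j \<in> I" "i \<noteq> j" and "n i \<ge> 1" "n j \<ge> 1"
    and "p i > 0" "p j > 0"
  defines "N \<equiv> (\<Prod>\<nu>\<in>I. p \<nu> ^ n \<nu>) div (p i * p j)"
  shows "(\<Prod>\<nu>\<in>I. p \<nu> ^ n \<nu>) = N * p i * p j"
    and "p i ^ (n i - 1) dvd N" and "p j ^ (n j - 1) dvd N"
proof -
  have "p i ^ n i * p j ^ n j dvd (\<Prod>\<nu>\<in>I. p \<nu> ^ n \<nu>)"
    using prod_dvd_prod_subset[OF assms(1), of "{i, j}" "\<lambda>\<nu>. p \<nu> ^ n \<nu>"] assms(2-4) by simp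
  then obtain R where R: "(\<Prod>\<nu>\<in>I. p \<nu> ^ n \<nu>) = p i ^ n i * p j ^ n j * R" ..
  have "p \<nu> ^ n \<nu> = p \<nu> ^ (n \<nu> - 1) * p \<nu>" if "n \<nu> \<ge> 1" for \<nu>
    using that by (cases "n \<nu>") (simp_all add: mult.commute)
  then have "p i ^ n i * p j ^ n j = (p i ^ (n i - 1) * p i) * (p j ^ (n j - 1) * p j)"
    using assms(5,6) by simp
  then have "(\<Prod>\<nu>\<in>I. p \<nu> ^ n \<nu>) = (p i ^ (n i - 1) * p j ^ (n j - 1) * R) * p i * p j"
    unfolding R by (simp add: ac_simps)
  moreover from this have "N = p i ^ (n i - 1) * p j ^ (n j - 1) * R"
    unfolding N_def using assms(7,8) by simp
  ultimately show "(\<Prod>\<nu>\<in>I. p \<nu> ^ n \<nu>) = N * p i * p j"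
    and "p i ^ (n i - 1) dvd N" and "p j ^ (n j - 1) dvd N" by simp_all
qed

section \<open>Tilings of \<open>\<int>\<^sub>M\<close>\<close>

lemma tiling_less:
  assumes "tiling M A B"
  shows "a \<in> A \<Longrightarrow> a < M" and "b \<in> B \<Longrightarrow> b < M"
  using assms unfolding tiling_def ZM_def by auto

lemma tiling_cong_unique:
  assumes "tiling M A B" and "a1 \<in> A" "b1 \<in> B" "a2 \<in> A" "b2 \<in> B"
    and "[a1 + b1 = a2 + b2] (mod M)"
  shows "a1 = a2 \<and> b1 = b2"
proof -
  have "M > 0" using assms(1,2) tiling_less(1) by fastforce
  then have "(a1 + b1) mod M \<in> ZM M" unfolding ZM_def by simp
  then have "\<exists>!ab. fst ab \<in> A \<and> snd ab \<in> B \<and> (fst ab + snd ab) mod M = (a1 + b1) mod M"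
    using assms(1) unfolding tiling_def by blast
  then have "(a1, b1) = (a2, b2)"
    using assms(2-) unfolding cong_def by (metis fst_conv snd_conv)
  then show ?thesis by simp
qed

lemma tiling_cong_exists:
  assumes "tiling M A B" and "M > 0"
  shows "\<exists>a\<in>A. \<exists>b\<in>B. [a + b = y] (mod M)"
proof -
  have "y mod M \<in> ZM M" using assms(2) unfolding ZM_def by simp
  then obtain ab where "fst ab \<in> A" "snd ab \<in> B" "(fst ab + snd ab) mod M = y mod M"
    using assms(1) unfolding tiling_def by blast
  then show ?thesis unfolding cong_def by blast
qed

lemma image_mult_add_mod:
  fixes M u :: nat
  assumes "M > 0" and rep: "\<And>x. \<exists>a\<in>A. \<exists>b\<in>B. [u * a + b = x] (mod M)"
  shows "(\<lambda>(a, b). (u * a + b) mod M) ` (A \<times> B) = {..<M}"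
proof
  show "{..<M} \<subseteq> (\<lambda>(a, b). (u * a + b) mod M) ` (A \<times> B)"
  proof
    fix x assume "x \<in> {..<M}"
    obtain a b where "a \<in> A" "b \<in> B" "[u * a + b = x] (mod M)" using rep by blast
    moreover from this have "x = (u * a + b) mod M" using \<open>x \<in> {..<M}\<close> by (simp add: cong_def)
    ultimately show "x \<in> (\<lambda>(a, b). (u * a + b) mod M) ` (A \<times> B)"
      by (intro image_eqI[of _ _ "(a, b)"]) simp_all
  qed
qed (use assms(1) in auto)

lemma tiling_card:
  assumes "tiling M A B"
  shows "card A * card B = M"
proof (cases "M = 0")
  case True
  then show ?thesis using tiling_less(1)[OF assms] by fastforce
next
  case False
  let ?sum = "\<lambda>(a, b). (1 * a + b) mod M"
  have "inj_on ?sum (A \<times> B)"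
    using tiling_cong_unique[OF assms] by (auto intro!: inj_onI simp: cong_def)
  moreover have "?sum ` (A \<times> B) = {..<M}"
    using False tiling_cong_exists[OF assms] by (intro image_mult_add_mod) simp_all
  ultimately have "card (A \<times> B) = card {..<M}" using card_image by fastforce
  then show ?thesis by (simp add: card_cartesian_product)
qed

definition dilate :: "nat \<Rightarrow> nat \<Rightarrow> nat set \<Rightarrow> nat set" where
  "dilate M u A = (\<lambda>a. u * a mod M) ` A"

lemma tiling_dilateI:
  assumes tile: "tiling M A B" and rep: "\<And>x. \<exists>a\<in>A. \<exists>b\<in>B. [u * a + b = x] (mod M)"
  shows "tiling M (dilate M u A) B"
proof -
  let ?g = "\<lambda>(a, b). (u * a + b) mod M"
  have M0: "M > 0" using rep[of 0] tiling_less(1)[OF tile] by fastforce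
  have "?g ` (A \<times> B) = {..<M}" using M0 rep by (rule image_mult_add_mod)
  moreover have "finite (A \<times> B)"
    using tiling_less[OF tile] by (meson finite_SigmaI finite_nat_set_iff_bounded)
  ultimately have inj: "inj_on ?g (A \<times> B)"
    using tiling_card[OF tile] by (intro eq_card_imp_inj_on) (simp_all add: card_cartesian_product)
  show ?thesis
    unfolding tiling_def
  proof (intro conjI ballI)
    show "dilate M u A \<subseteq> ZM M" using M0 unfolding dilate_def ZM_def by auto
    show "B \<subseteq> ZM M" using tiling_less(2)[OF tile] unfolding ZM_def by auto
    fix x assume "x \<in> ZM M"
    then have x: "x < M" unfolding ZM_def by simp
    obtain a b where ab: "a \<in> A" "b \<in> B" "(u * a + b) mod M = x"
      using rep[of x] x unfolding cong_def by auto
    show "\<exists>!ab. fst ab \<in> dilate M u A \<and> snd ab \<in> B \<and> (fst ab + snd ab) mod M = x"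
    proof (rule ex1I[of _ "(u * a mod M, b)"])
      show "fst (u * a mod M, b) \<in> dilate M u A \<and> snd (u * a mod M, b) \<in> B
          \<and> (fst (u * a mod M, b) + snd (u * a mod M, b)) mod M = x"
        using ab unfolding dilate_def by (simp add: mod_add_left_eq)
    next
      fix ab' assume "fst ab' \<in> dilate M u A \<and> snd ab' \<in> B \<and> (fst ab' + snd ab') mod M = x"
      then obtain a' where "a' \<in> A" "fst ab' = u * a' mod M" "snd ab' \<in> B"
          "(u * a' + snd ab') mod M = x"
        unfolding dilate_def by (auto simp: mod_add_left_eq)
      then show "ab' = (u * a mod M, b)"
        using inj_onD[OF inj, of "(a', snd ab')" "(a, b)"] ab by (cases ab') auto
    qed
  qed
qed

section \<open>Tijdeman's dilation theorem\<close>

lemma card_tiling_lists: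
  assumes tile: "tiling M A B" and M0: "M > 0"
  shows "card {xs. set xs \<subseteq> A \<and> length xs = Suc n \<and> (\<exists>b\<in>B. [sum_list xs + b = x] (mod M))}
    = card A ^ n"
    (is "card ?T = _")
proof -
  let ?L = "{ys. set ys \<subseteq> A \<and> length ys = n}"
  have "finite A" using tiling_less(1)[OF tile] finite_nat_set_iff_bounded by blast
  have inj: "inj_on tl ?T"
  proof (rule inj_onI)
    fix xs ys assume "xs \<in> ?T" "ys \<in> ?T" and tl_eq: "tl xs = tl ys"
    then obtain a1 a2 zs b1 b2 where xs: "xs = a1 # zs" and ys: "ys = a2 # zs"
      and "a1 \<in> A" "a2 \<in> A" "b1 \<in> B" "b2 \<in> B"
      and "[a1 + b1 + sum_list zs = x] (mod M)" "[a2 + b2 + sum_list zs = x] (mod M)"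
      by (cases xs; cases ys) (auto simp: ac_simps)
    moreover from this have "[a1 + b1 = a2 + b2] (mod M)"
      by (metis cong_add_rcancel_nat cong_sym cong_trans)
    ultimately show "xs = ys" using tiling_cong_unique[OF tile] by blast
  qed
  have image: "tl ` ?T = ?L"
  proof
    show "tl ` ?T \<subseteq> ?L"
    proof
      fix ys assume "ys \<in> tl ` ?T"
      then obtain xs where "xs \<in> ?T" "ys = tl xs" by blast
      then show "ys \<in> ?L" by (cases xs) auto
    qed
    show "?L \<subseteq> tl ` ?T"
    proof
      fix ys assume ys: "ys \<in> ?L"
      let ?s = "sum_list ys"
      \<comment> \<open>\<open>x + (M - 1) * s\<close> is \<open>x - s\<close> modulo \<open>M\<close>, avoiding truncated subtraction\<close>
      obtain a b where ab: "a \<in> A" "b \<in> B" "[a + b = x + (M - 1) * ?s] (mod M)"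
        using tiling_cong_exists[OF tile M0] by blast
      have "[a + b + ?s = x + (M - 1) * ?s + ?s] (mod M)"
        using ab(3) by (rule cong_add) simp
      then have "[sum_list (a # ys) + b = x + (M - 1) * ?s + ?s] (mod M)"
        by (simp add: ac_simps)
      also have "x + (M - 1) * ?s + ?s = x + M * ?s" using M0 by (cases M) simp_all
      also have "[\<dots> = x] (mod M)" by (simp add: cong_def)
      finally have "[sum_list (a # ys) + b = x] (mod M)" .
      then have "a # ys \<in> ?T" using ab(1,2) ys by auto
      then show "ys \<in> tl ` ?T" by (rule rev_image_eqI) simp
    qed
  qed
  have "card ?T = card ?L" using card_image[OF inj] image by simp
  then show ?thesis using card_lists_length_eq[OF \<open>finite A\<close>] by simp
qed

lemma tiling_prime_mult_exists:
  assumes tile: "tiling M A B" and q: "prime q" and cop: "coprime q M"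
  shows "\<exists>a\<in>A. \<exists>b\<in>B. [q * a + b = x] (mod M)"
proof (rule ccontr)
  assume none: "\<not> ?thesis"
  have M0: "M > 0" using cop q by (cases "M = 0") auto
  have q0: "q = Suc (q - 1)" using prime_gt_0_nat[OF q] by simp
  define T where "T = {xs. set xs \<subseteq> A \<and> length xs = q \<and> (\<exists>b\<in>B. [sum_list xs + b = x] (mod M))}"
  have "finite A" using tiling_less(1)[OF tile] finite_nat_set_iff_bounded by blast
  then have "finite T"
    by (rule finite_subset[rotated, OF finite_lists_length_eq[of A q]]) (auto simp: T_def)
  have "sum_list (rotate1 xs) = sum_list xs" for xs :: "nat list" by (cases xs) simp_all
  then have "rotate1 ` T \<subseteq> T" unfolding T_def by auto
  then have "[card T = card {c. replicate q c \<in> T}] (mod q)"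
    using card_words_cong_card_constant_words[OF \<open>finite T\<close> q] unfolding T_def by blast
  moreover have "{c. replicate q c \<in> T} = {}"
    using none q0 unfolding T_def by (auto simp: sum_list_replicate)
  moreover have "card T = card A ^ (q - 1)"
    unfolding T_def using card_tiling_lists[OF tile M0, of "q - 1"] q0 by simp
  ultimately have "q dvd card A ^ (q - 1)" by (simp add: cong_0_iff)
  then have "q dvd card A" by (rule prime_dvd_power[OF q])
  moreover have "coprime q (card A)" using cop tiling_card[OF tile] by (metis coprime_mult_right_iff)
  ultimately show False using q coprime_common_divisor[OF _ dvd_refl] not_prime_unit by blast
qed

lemma tiling_coprime_mult_exists:
  assumes tile: "tiling M A B" and M0: "M > 0" and "coprime u M"
  shows "\<exists>a\<in>A. \<exists>b\<in>B. [u * a + b = x] (mod M)"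
  using assms(3)
proof (induction u arbitrary: x rule: prime_divisors_induct)
  case zero
  then have "M = 1" by simp
  moreover obtain a b where "a \<in> A" "b \<in> B"
    using tiling_cong_exists[OF tile, of 0] \<open>M = 1\<close> by auto
  ultimately show ?case by auto
next
  case (unit u)
  then show ?case using tiling_cong_exists[OF tile M0] by simp
next
  case (factor q u)
  then have "coprime q M" "coprime u M" by simp_all
  then have "tiling M (dilate M u A) B" using tiling_dilateI[OF tile factor.IH] by blast
  then obtain a' b where "a' \<in> dilate M u A" "b \<in> B" "[q * a' + b = x] (mod M)"
    using tiling_prime_mult_exists factor.hyps(1) \<open>coprime q M\<close> by blast
  then obtain a where "a \<in> A" "[q * (u * a mod M) + b = x] (mod M)" unfolding dilate_def by blast
  moreover have "[q * (u * a mod M) + b = q * u * a + b] (mod M)"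
    unfolding cong_def by (metis mod_add_left_eq mod_mult_right_eq mult.assoc)
  ultimately show ?case using \<open>b \<in> B\<close> by (metis cong_sym cong_trans)
qed

theorem tiling_dilate:
  assumes "tiling M A B" and "coprime u M"
  shows "tiling M (dilate M u A) B"
proof (cases "M = 0")
  case True
  then have "A = {}" using tiling_less(1)[OF assms(1)] by auto
  then show ?thesis using assms(1) by (simp add: dilate_def)
next
  case False
  then show ?thesis using assms by (intro tiling_dilateI tiling_coprime_mult_exists) simp_all
qed

lemma tiling_coprime_mult_cancel:
  assumes tile: "tiling M A B" and "coprime u (int M)"
    and a: "a1 \<in> A" "a2 \<in> A" and b: "b1 \<in> B" "b2 \<in> B"
    and "[u * (int a1 - int a2) = int b2 - int b1] (mod int M)"
  shows "a1 = a2"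
proof -
  have "M > 0" using tiling_less(1)[OF tile a(1)] by simp
  define v where "v = nat (u mod int M)"
  have v: "int v = u mod int M" unfolding v_def using \<open>M > 0\<close> by simp
  have "coprime (int v) (int M)" using assms(2) \<open>M > 0\<close> unfolding v by simp
  then have "coprime v M" by simp
  have "[int v * (int a1 - int a2) = u * (int a1 - int a2)] (mod int M)"
    unfolding v by (rule cong_scalar_right) simp
  then have "[int v * (int a1 - int a2) = int b2 - int b1] (mod int M)"
    using assms(7) by (rule cong_trans)
  then have "[v * a1 + b1 = v * a2 + b2] (mod M)"
    unfolding cong_int_iff[symmetric] cong_iff_dvd_diff by (simp add: algebra_simps)
  then have "v * a1 mod M = v * a2 mod M"
    using tiling_cong_unique[OF tiling_dilate[OF tile \<open>coprime v M\<close>], of "v * a1 mod M" b1 "v * a2 mod M" b2]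
      a b unfolding dilate_def cong_def by (simp add: mod_add_left_eq)
  then have "a1 mod M = a2 mod M"
    using cong_mult_lcancel_nat \<open>coprime v M\<close> unfolding cong_def by metis
  then show ?thesis using tiling_less(1)[OF tile] a by simp
qed

section \<open>Sums congruent modulo \<open>M / (p q)\<close>\<close>

lemma tiling_sum_cong_imp_cong_prime_power:
  assumes tile: "tiling M A B" and M: "M = N * p * q" and p: "prime p" and q: "prime q"
    and "p ^ e dvd N" "q ^ f dvd N"
    and a: "a1 \<in> A" "a2 \<in> A" and b: "b1 \<in> B" "b2 \<in> B"
    and sum_cong: "[a1 + b1 = a2 + b2] (mod N)"
  shows "[a1 = a2] (mod p ^ e) \<or> [a1 = a2] (mod q ^ f)"
proof (rule ccontr)
  define X where "X = int a1 - int a2"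
  define Y where "Y = int b2 - int b1"
  assume "\<not> ?thesis"
  then have X_not_dvd: "\<not> int p ^ e dvd X" "\<not> int q ^ f dvd X"
    unfolding X_def by (simp_all add: cong_int_iff[symmetric] cong_iff_dvd_diff)
  have "[X = Y] (mod int N)"
    using sum_cong unfolding X_def Y_def cong_int_iff[symmetric] cong_iff_dvd_diff
    by (simp add: algebra_simps)
  moreover have "int p ^ e dvd int N" "int q ^ f dvd int N"
    using assms(5,6) by (simp_all flip: of_nat_power)
  ultimately have Y_not_dvd: "\<not> int p ^ e dvd Y" "\<not> int q ^ f dvd Y"
    using X_not_dvd by (metis cong_dvd_iff cong_dvd_modulus)+
  have gcd_drop: "gcd W (int M) = gcd W (int N)"
    if "\<not> int p ^ e dvd W" "\<not> int q ^ f dvd W" for W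
  proof -
    have "gcd W (int M) = gcd W (int N * int p * int q)" unfolding M by simp
    also have "\<dots> = gcd W (int N * int p)"
      using that(2) \<open>int q ^ f dvd int N\<close> q
      by (intro gcd_mult_prime_eq) simp_all
    also have "\<dots> = gcd W (int N)"
      using that(1) \<open>int p ^ e dvd int N\<close> p
      by (intro gcd_mult_prime_eq) simp_all
    finally show ?thesis .
  qed
  have "gcd X (int M) = gcd Y (int M)"
    using gcd_drop[OF X_not_dvd] gcd_drop[OF Y_not_dvd] cong_gcd_eq[OF \<open>[X = Y] (mod int N)\<close>]
    by simp
  moreover have "M > 0" using tiling_less(1)[OF tile a(1)] by simp
  ultimately obtain u where "coprime u (int M)" "[u * X = Y] (mod int M)"
    using exists_coprime_mult_cong[of "int M" X Y] by auto
  then have "a1 = a2"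
    using tiling_coprime_mult_cancel[OF tile _ a b] unfolding X_def Y_def by blast
  then show False using X_not_dvd unfolding X_def by simp
qed

lemma tiling_Sigma_subset_Lam:
  assumes tile: "tiling M A B" and "a \<in> A" "b \<in> B" and "N dvd M" "P dvd N"
    and cong: "\<forall>a'\<in>A. \<forall>b'\<in>B. [a' + b' = a + b] (mod N) \<longrightarrow> [a' = a] (mod P)"
  shows "SigmaA M A B (Lam M ((a + b) mod M) N) \<subseteq> A \<inter> Lam M a P
    \<and> SigmaB M A B (Lam M ((a + b) mod M) N) \<subseteq> B \<inter> Lam M b P"
proof -
  have sum_cong: "[a' + b' = a + b] (mod N)" if "(a' + b') mod M \<in> Lam M ((a + b) mod M) N" for a' b'
    using that \<open>N dvd M\<close> unfolding Lam_def cong_def by (simp add: mod_mod_cancel)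
  have "A \<inter> Lam M a P = {a' \<in> A. [a' = a] (mod P)}" "B \<inter> Lam M b P = {b' \<in> B. [b' = b] (mod P)}"
    using tiling_less[OF tile] unfolding Lam_def ZM_def by (auto simp: cong_sym_eq)
  moreover have "[b' = b] (mod P)"
    if "a' \<in> A" "b' \<in> B" "[a' + b' = a + b] (mod N)" for a' b'
  proof -
    have "[a' + b' = a + b] (mod P)" using that(3) \<open>P dvd N\<close> by (rule cong_dvd_modulus_nat)
    moreover have "[a' = a] (mod P)" using cong that by blast
    ultimately show ?thesis by (metis cong_add_lcancel_nat cong_add_rcancel_nat cong_trans cong_sym)
  qed
  ultimately show ?thesis
    using cong sum_cong unfolding SigmaA_def SigmaB_def by blast
qed

theorem lemma7p1:
  fixes M K :: nat and p n :: "nat \<Rightarrow> nat" and A B :: "nat set"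
    and i j z a b :: nat
  assumes M_def: "M = (\<Prod>\<nu>\<in>{1..K}. p \<nu> ^ n \<nu>)"
    and primes: "\<forall>\<nu>\<in>{1..K}. prime (p \<nu>)"
    and distinct: "inj_on p {1..K}"
    and exps: "\<forall>\<nu>\<in>{1..K}. n \<nu> \<ge> 1"
    and tile: "tiling M A B"
    and ij: "i \<in> {1..K}" "j \<in> {1..K}" "i \<noteq> j"
    and z: "z \<in> ZM M"
    and ab: "a \<in> A" "b \<in> B" "(a + b) mod M = z"
  shows "\<exists>\<nu>\<in>{i, j}.
     SigmaA M A B (Lam M z (M div (p i * p j))) \<subseteq> A \<inter> Lam M a (p \<nu> ^ (n \<nu> - 1)) \<and>
     SigmaB M A B (Lam M z (M div (p i * p j))) \<subseteq> B \<inter> Lam M b (p \<nu> ^ (n \<nu> - 1))"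
proof -
  let ?P = "\<lambda>\<nu>. p \<nu> ^ (n \<nu> - 1)" and ?N = "M div (p i * p j)"
  have "prime (p i)" "prime (p j)" using primes ij by auto
  moreover have "1 \<le> n i" "1 \<le> n j" using exps ij by auto
  ultimately have "M = ?N * p i * p j" "?P i dvd ?N" "?P j dvd ?N"
    using prod_power_cofactor[OF finite_atLeastAtMost ij, of n p, folded M_def] prime_gt_0_nat
    by simp_all
  define S where "S = {a' \<in> A. \<exists>b'\<in>B. [a' + b' = a + b] (mod ?N)}"
  have "\<forall>x\<in>S. \<forall>y\<in>S. [x = y] (mod ?P i) \<or> [x = y] (mod ?P j)"
  proof (intro ballI)
    fix x y assume "x \<in> S" "y \<in> S"
    then obtain bx "by" where "x \<in> A" "y \<in> A" "bx \<in> B" "by \<in> B"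
      and "[x + bx = a + b] (mod ?N)" "[y + by = a + b] (mod ?N)" unfolding S_def by blast
    moreover from this have "[x + bx = y + by] (mod ?N)" by (metis cong_sym cong_trans)
    ultimately show "[x = y] (mod ?P i) \<or> [x = y] (mod ?P j)"
      using tiling_sum_cong_imp_cong_prime_power[OF tile \<open>M = ?N * p i * p j\<close>] \<open>prime (p i)\<close>
        \<open>prime (p j)\<close> \<open>?P i dvd ?N\<close> \<open>?P j dvd ?N\<close> by blast
  qed
  moreover have "a \<in> S" using ab(1,2) cong_refl unfolding S_def by blast
  ultimately have "(\<forall>x\<in>S. [x = a] (mod ?P i)) \<or> (\<forall>x\<in>S. [x = a] (mod ?P j))"
    by (rule pairwise_cong_imp_all_cong)
  then obtain \<nu> where "\<nu> \<in> {i, j}" and "?P \<nu> dvd ?N"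
    and "\<forall>a'\<in>A. \<forall>b'\<in>B. [a' + b' = a + b] (mod ?N) \<longrightarrow> [a' = a] (mod ?P \<nu>)"
    using \<open>?P i dvd ?N\<close> \<open>?P j dvd ?N\<close> unfolding S_def by blast
  moreover have "?N dvd M" using \<open>M = ?N * p i * p j\<close> by (metis dvd_triv_left mult.assoc)
  ultimately show ?thesis using tiling_Sigma_subset_Lam[OF tile ab(1,2)] unfolding ab(3) by blast
qed

end
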